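(* Let $G$ be a connected edge-stable equimatchable graph with at least $3$ vertices and let $M$ be a maximal matching of $G$. Then (i) $G$ has no perfect matching; and (ii) for every edge $uv\in M$ there exists a vertex $w$ not saturated by $M$ which is adjacent to $u$ or to $v$.
   Context: All graphs are finite and simple. A graph is equimatchable if all its maximal matchings have the same cardinality; an equimatchable graph $G$ is edge-stable if $G\setminus e$ (delete edge $e$, keep vertices) is equimatchable for every $e\in E(G)$. A matching saturates a vertex if the vertex is an endpoint of one of its edges. *)

theory Defs
  imports Main
begin

definition graph :: "'a set \<Rightarrow> 'a set set \<Rightarrow> bool" where
  "graph V E \<longleftrightarrow> finite V \<and> (\<forall>e\<in>E. e \<subseteq> V \<and> card e = 2)"

definition adj :: "'a set set \<Rightarrow> 'a \<Rightarrow> 'a \<Rightarrow> bool" where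
  "adj E u v \<longleftrightarrow> {u, v} \<in> E"

definition connected_graph :: "'a set \<Rightarrow> 'a set set \<Rightarrow> bool" where
  "connected_graph V E \<longleftrightarrow> (\<forall>u\<in>V. \<forall>v\<in>V. (adj E)\<^sup>*\<^sup>* u v)"

definition matching :: "'a set set \<Rightarrow> 'a set set \<Rightarrow> bool" where
  "matching E M \<longleftrightarrow> M \<subseteq> E \<and> (\<forall>e1\<in>M. \<forall>e2\<in>M. e1 \<noteq> e2 \<longrightarrow> e1 \<inter> e2 = {})"

definition maximal_matching :: "'a set set \<Rightarrow> 'a set set \<Rightarrow> bool" where
  "maximal_matching E M \<longleftrightarrow> matching E M \<and>
     (\<forall>M'. matching E M' \<and> M \<subseteq> M' \<longrightarrow> M' = M)"

definition saturates :: "'a set set \<Rightarrow> 'a \<Rightarrow> bool" where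
  "saturates M v \<longleftrightarrow> (\<exists>e\<in>M. v \<in> e)"

definition perfect_matching :: "'a set \<Rightarrow> 'a set set \<Rightarrow> 'a set set \<Rightarrow> bool" where
  "perfect_matching V E M \<longleftrightarrow> matching E M \<and> (\<forall>v\<in>V. saturates M v)"

definition equimatchable :: "'a set set \<Rightarrow> bool" where
  "equimatchable E \<longleftrightarrow>
     (\<forall>M1 M2. maximal_matching E M1 \<and> maximal_matching E M2 \<longrightarrow> card M1 = card M2)"

definition edge_stable :: "'a set set \<Rightarrow> bool" where
  "edge_stable E \<longleftrightarrow> equimatchable E \<and> (\<forall>e\<in>E. equimatchable (E - {e}))"

end

theory Submission
  imports Defs
begin

text \<open>Suppose every neighbour of the endpoints of some \<open>e = uv \<in> M\<close> were saturated by \<open>M\<close>.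
  Then \<open>M - {e}\<close> is still maximal in \<open>G - e\<close>. On the other hand, connectivity and
  \<open>|V| \<ge> 3\<close> give an edge \<open>f \<noteq> e\<close> meeting \<open>e\<close>; a maximal matching of \<open>G\<close> through \<open>f\<close>
  avoids \<open>e\<close>, so it is also maximal in \<open>G - e\<close> and has \<open>|M|\<close> edges by equimatchability
  of \<open>G\<close>. This contradicts equimatchability of \<open>G - e\<close>. A perfect matching is maximal
  and saturates every vertex, so it cannot satisfy the conclusion just proved.\<close>

lemma rtranclp_leaves_set:
  assumes "R\<^sup>*\<^sup>* a b" "a \<in> S" "b \<notin> S"
  shows "\<exists>x y. x \<in> S \<and> y \<notin> S \<and> R x y"
  using assms
proof (induction rule: rtranclp.induct)
  case (rtrancl_into_rtrancl a b c)
  then show ?case by (cases "b \<in> S") auto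
qed simp

lemma card_2_obtain_other:
  assumes "card g = 2" "x \<in> g"
  obtains z where "z \<noteq> x" "g = {x, z}"
  using assms by (metis card_2_iff insert_commute insertE singletonD)

lemma matching_Diff_singleton_iff:
  "matching (E - {e}) N \<longleftrightarrow> matching E N \<and> e \<notin> N"
  unfolding matching_def by auto

lemma maximal_matchingI:
  assumes "matching E M"
    and "\<And>g. g \<in> E \<Longrightarrow> g \<notin> M \<Longrightarrow> \<exists>h\<in>M. h \<inter> g \<noteq> {}"
  shows "maximal_matching E M"
  unfolding maximal_matching_def
proof (intro conjI allI impI)
  fix M' assume M': "matching E M' \<and> M \<subseteq> M'"
  then have "M' \<subseteq> E" and disjoint: "\<And>h g. h \<in> M' \<Longrightarrow> g \<in> M' \<Longrightarrow> h \<noteq> g \<Longrightarrow> h \<inter> g = {}"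
    unfolding matching_def by blast+
  show "M' = M"
  proof (rule ccontr)
    assume "M' \<noteq> M"
    then obtain g where g: "g \<in> M'" "g \<notin> M" using M' by auto
    have "g \<in> E" using g(1) \<open>M' \<subseteq> E\<close> by blast
    then obtain h where "h \<in> M" "h \<inter> g \<noteq> {}" using assms(2)[OF _ g(2)] by blast
    with g M' disjoint show False by blast
  qed
qed fact

lemma maximal_matchingD:
  assumes "maximal_matching E M" "g \<in> E" "g \<notin> M"
  shows "\<exists>h\<in>M. h \<inter> g \<noteq> {}"
proof (rule ccontr)
  assume "\<not> ?thesis"
  with assms have "matching E (insert g M)"
    unfolding maximal_matching_def matching_def by (auto simp: Int_commute)
  with assms show False unfolding maximal_matching_def by blast
qed

lemma maximal_matching_Diff_edge:
  assumes "maximal_matching E N" "e \<notin> N"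
  shows "maximal_matching (E - {e}) N"
  using assms unfolding maximal_matching_def matching_Diff_singleton_iff by blast

lemma maximal_matching_extends:
  assumes "finite E" "matching E N0"
  shows "\<exists>N. N0 \<subseteq> N \<and> maximal_matching E N"
  using assms(2)
proof (induction "card E - card N0" arbitrary: N0 rule: less_induct)
  case less
  show ?case
  proof (cases "maximal_matching E N0")
    case False
    then obtain M' where M': "matching E M'" "N0 \<subset> M'"
      using less.prems unfolding maximal_matching_def by blast
    have "M' \<subseteq> E" using M'(1) unfolding matching_def by blast
    with assms(1) M'(2) have "card E - card M' < card E - card N0"
      by (meson card_mono diff_less_mono2 order_less_le_trans psubset_card_mono rev_finite_subset)
    from less.hyps[OF this M'(1)] M'(2) show ?thesis by blast
  qed blast
qed

lemma perfect_matching_maximal: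
  assumes "graph V E" "perfect_matching V E P"
  shows "maximal_matching E P"
proof (rule maximal_matchingI)
  show "matching E P" using assms(2) unfolding perfect_matching_def by blast
next
  fix g assume "g \<in> E"
  with assms(1) have "g \<subseteq> V" "g \<noteq> {}" unfolding graph_def by auto
  then obtain z where "z \<in> V" "z \<in> g" by blast
  with assms(2) show "\<exists>h\<in>P. h \<inter> g \<noteq> {}"
    unfolding perfect_matching_def saturates_def by blast
qed

lemma maximal_matching_Diff_saturated_edge:
  assumes "graph V E" "maximal_matching E M" "{u, v} \<in> M"
    and saturated: "\<And>w. adj E w u \<or> adj E w v \<Longrightarrow> saturates M w"
  shows "maximal_matching (E - {{u, v}}) (M - {{u, v}})"
proof (rule maximal_matchingI)
  let ?e = "{u, v}"
  have "matching E M" using assms(2) unfolding maximal_matching_def by blast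
  then show "matching (E - {?e}) (M - {?e})" unfolding matching_def by auto
  fix g assume g: "g \<in> E - {?e}" "g \<notin> M - {?e}"
  then obtain h where h: "h \<in> M" "h \<inter> g \<noteq> {}"
    using maximal_matchingD[OF assms(2)] by blast
  show "\<exists>h\<in>M - {?e}. h \<inter> g \<noteq> {}"
  proof (cases "h = ?e")
    case True
    with h obtain x where x: "x \<in> ?e" "x \<in> g" by blast
    have "card g = 2" using assms(1) g unfolding graph_def by blast
    then obtain z where z: "z \<noteq> x" "g = {x, z}" using x(2) by (rule card_2_obtain_other)
    with g x have "z \<notin> ?e" by auto
    have "adj E z x" using g z unfolding adj_def by (simp add: insert_commute)
    with x(1) obtain h' where "h' \<in> M" "z \<in> h'"
      using saturated unfolding saturates_def by blast
    with \<open>z \<notin> ?e\<close> z show ?thesis by blast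
  qed (use h in blast)
qed

lemma connected_graph_edge_leaving_pair:
  assumes "connected_graph V E" "card V \<ge> 3" "u \<in> V"
  shows "\<exists>x y. x \<in> {u, v} \<and> y \<notin> {u, v} \<and> adj E x y"
proof -
  have "card {u, v} \<le> 2" by (simp add: card_insert_if)
  with assms(2) have "\<not> V \<subseteq> {u, v}" using card_mono[of "{u, v}" V] by auto
  then obtain w where "w \<in> V" "w \<notin> {u, v}" by blast
  moreover have "(adj E)\<^sup>*\<^sup>* u w"
    using assms(1,3) \<open>w \<in> V\<close> unfolding connected_graph_def by blast
  ultimately show ?thesis using rtranclp_leaves_set[of "adj E" u w "{u, v}"] by blast
qed

theorem matched_edge_has_unsaturated_neighbour:
  assumes g: "graph V E" and "connected_graph V E" and stable: "edge_stable E"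
    and "card V \<ge> 3" and M: "maximal_matching E M" and uv: "{u, v} \<in> M"
  shows "\<exists>w\<in>V. \<not> saturates M w \<and> (adj E w u \<or> adj E w v)"
proof (rule ccontr)
  let ?e = "{u, v}"
  assume "\<not> ?thesis"
  moreover have "\<And>w. adj E w u \<or> adj E w v \<Longrightarrow> w \<in> V"
    using g unfolding graph_def adj_def by blast
  ultimately have "maximal_matching (E - {?e}) (M - {?e})"
    using maximal_matching_Diff_saturated_edge[OF g M uv] by blast
  have "?e \<in> E" "finite E"
    using M uv g unfolding maximal_matching_def matching_def graph_def
    by (auto intro: finite_subset[of E "Pow V"])
  then have "u \<in> V" using g unfolding graph_def by blast
  then obtain x y where xy: "x \<in> ?e" "y \<notin> ?e" "adj E x y"
    using connected_graph_edge_leaving_pair[OF assms(2,4)] by blast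
  then have "matching E {{x, y}}" unfolding adj_def matching_def by blast
  then obtain N where N: "{x, y} \<in> N" "maximal_matching E N"
    using maximal_matching_extends \<open>finite E\<close> by blast
  have "matching E N" using N(2) unfolding maximal_matching_def by blast
  moreover have "?e \<noteq> {x, y}" "?e \<inter> {x, y} \<noteq> {}" using xy(1,2) by auto
  ultimately have "?e \<notin> N" using N(1) unfolding matching_def by (meson disjoint_iff)
  with N(2) have "maximal_matching (E - {?e}) N" by (rule maximal_matching_Diff_edge)
  have "finite M" using M \<open>finite E\<close> unfolding maximal_matching_def matching_def
    by (auto intro: finite_subset)
  have "card N = card M" "card (M - {?e}) = card N"
    using stable N(2) M \<open>?e \<in> E\<close> \<open>maximal_matching (E - {?e}) (M - {?e})\<close>
      \<open>maximal_matching (E - {?e}) N\<close>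
    unfolding edge_stable_def equimatchable_def by blast+
  moreover have "card M > 0" using \<open>finite M\<close> uv card_gt_0_iff by blast
  ultimately show False using \<open>finite M\<close> uv by simp
qed

lemma no_perfect_matching:
  assumes g: "graph V E" and "connected_graph V E" and "edge_stable E" and "card V \<ge> 3"
  shows "\<not> (\<exists>P. perfect_matching V E P)"
proof
  assume "\<exists>P. perfect_matching V E P"
  then obtain P where P: "perfect_matching V E P" ..
  from assms(4) obtain v0 where "v0 \<in> V" by fastforce
  with P obtain h where "h \<in> P" "v0 \<in> h"
    unfolding perfect_matching_def saturates_def by blast
  moreover have "card h = 2"
    using g P \<open>h \<in> P\<close> unfolding graph_def perfect_matching_def matching_def by blast
  ultimately obtain a b where "{a, b} \<in> P" by (metis card_2_iff)
  from matched_edge_has_unsaturated_neighbour[OF assms perfect_matching_maximal[OF g P] this]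
  show False using P unfolding perfect_matching_def by blast
qed

theorem corollary2p2:
  fixes V :: "'a set" and E M :: "'a set set"
  assumes "graph V E"
    and "connected_graph V E"
    and "edge_stable E"
    and "card V \<ge> 3"
    and "maximal_matching E M"
  shows "(\<not> (\<exists>P. perfect_matching V E P)) \<and>
         (\<forall>u v. {u, v} \<in> M \<longrightarrow>
           (\<exists>w\<in>V. \<not> saturates M w \<and> (adj E w u \<or> adj E w v)))"
  using no_perfect_matching[OF assms(1-4)] matched_edge_has_unsaturated_neighbour[OF assms]
  by blast

end
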